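(* Let $T$ be an out-directed tree with $l$ out-leaves. Then there is a symmetric out-directed tree $T'$ such that $T$ is a subgraph of $T'$, $T'$ has at most $l^l$ out-leaves, and $|T'|\le l^l|T|$.
   Context: An out-directed tree is an oriented tree (underlying graph a tree, no bidirected edges) with a root $r$ such that all edges are directed away from $r$. An out-leaf is a vertex of out-degree $0$. An out-directed tree with root $r$ is symmetric if for every $i\ge 0$ all vertices at distance $i$ from $r$ have the same out-degree. $|T|$ is the number of vertices. *)

theory Defs
  imports Main
begin

text \<open>An out-directed tree with root r: every vertex is reachable from r,
r has no in-neighbour and every other vertex has exactly one in-neighbour
(equivalently: underlying graph a tree, all edges directed away from r).\<close>

definition out_tree :: "'a set \<Rightarrow> ('a \<times> 'a) set \<Rightarrow> 'a \<Rightarrow> bool" where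
  "out_tree V E r \<longleftrightarrow>
     finite V \<and> r \<in> V \<and> E \<subseteq> V \<times> V \<and>
     (\<forall>u. (u, r) \<notin> E) \<and>
     (\<forall>v\<in>V. v \<noteq> r \<longrightarrow> (\<exists>!u. (u, v) \<in> E)) \<and>
     (\<forall>v\<in>V. (r, v) \<in> E\<^sup>*)"

definition out_degree :: "('a \<times> 'a) set \<Rightarrow> 'a \<Rightarrow> nat" where
  "out_degree E v = card {w. (v, w) \<in> E}"

definition out_leaves :: "'a set \<Rightarrow> ('a \<times> 'a) set \<Rightarrow> 'a set" where
  "out_leaves V E = {v \<in> V. out_degree E v = 0}"

text \<open>Vertices at distance i from r (in a tree the path from r is unique).\<close>
definition level :: "('a \<times> 'a) set \<Rightarrow> 'a \<Rightarrow> nat \<Rightarrow> 'a set" where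
  "level E r i = {v. (r, v) \<in> E ^^ i}"

definition symmetric_out_tree :: "'a set \<Rightarrow> ('a \<times> 'a) set \<Rightarrow> 'a \<Rightarrow> bool" where
  "symmetric_out_tree V E r \<longleftrightarrow> out_tree V E r \<and>
     (\<forall>i. \<forall>u\<in>level E r i. \<forall>v\<in>level E r i. out_degree E u = out_degree E v)"

text \<open>(V,E) is a subgraph of (V',E') up to isomorphism: an injective vertex map
sending vertices into V' and edges onto edges of E'.\<close>
definition subgraph_emb :: "('a \<Rightarrow> 'b) \<Rightarrow> 'a set \<Rightarrow> ('a \<times> 'a) set \<Rightarrow> 'b set \<Rightarrow> ('b \<times> 'b) set \<Rightarrow> bool" where
  "subgraph_emb f V E V' E' \<longleftrightarrow> inj_on f V \<and> f ` V \<subseteq> V' \<and>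
     (\<forall>u v. (u, v) \<in> E \<longrightarrow> (f u, f v) \<in> E')"

end

theory Submission
  imports Defs "HOL-Library.Countable"
begin

text \<open>Let \<open>d\<^sub>j\<close> be the largest out-degree (at least 1) occurring at depth \<open>j\<close> of \<open>T\<close>, and
\<open>h\<close> the height of \<open>T\<close>. Numbering the children of every vertex, each vertex is encoded by its
word of child indices along the path from the root; this embeds \<open>T\<close> into the symmetric tree of
all words of length at most \<open>h\<close> whose \<open>j\<close>-th letter is below \<open>d\<^sub>j\<close>. That tree has
\<open>\<Prod> d\<^sub>j\<close> leaves and at most \<open>(h + 1) \<Prod> d\<^sub>j \<le> |T| \<Prod> d\<^sub>j\<close> vertices. Choosing one vertex of maximal
degree per depth, \<open>\<Sum> (d\<^sub>j - 1) \<le> \<Sum>\<^sub>v (deg v - 1) = l - 1\<close>, hence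
\<open>\<Prod> d\<^sub>j \<le> 2^(l - 1) \<le> l^l\<close>.\<close>

definition sym_tree_V :: "nat \<Rightarrow> (nat \<Rightarrow> nat) \<Rightarrow> nat list set" where
  "sym_tree_V h d = {xs. length xs \<le> h \<and> (\<forall>j<length xs. xs ! j < d j)}"

definition sym_tree_E :: "nat \<Rightarrow> (nat \<Rightarrow> nat) \<Rightarrow> (nat list \<times> nat list) set" where
  "sym_tree_E h d = {(xs, xs @ [c]) | xs c. xs @ [c] \<in> sym_tree_V h d}"

definition words :: "(nat \<Rightarrow> nat) \<Rightarrow> nat \<Rightarrow> nat list set" where
  "words d i = {xs. length xs = i \<and> (\<forall>j<i. xs ! j < d j)}"

lemma snoc_in_sym_tree_V_iff:
  "xs @ [c] \<in> sym_tree_V h d \<longleftrightarrow> xs \<in> sym_tree_V h d \<and> length xs < h \<and> c < d (length xs)"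
  by (auto simp: sym_tree_V_def nth_append less_Suc_eq split: if_splits)

lemma sym_tree_V_eq_UN_words: "sym_tree_V h d = (\<Union>i\<le>h. words d i)"
  by (auto simp: sym_tree_V_def words_def)

lemma words_Suc: "words d (Suc i) = (\<lambda>(xs, c). xs @ [c]) ` (words d i \<times> {..<d i})"
proof (intro set_eqI iffI)
  fix ys assume ys: "ys \<in> words d (Suc i)"
  then obtain xs c where "ys = xs @ [c]"
    by (metis (mono_tags, lifting) words_def length_Suc_conv_rev mem_Collect_eq)
  with ys show "ys \<in> (\<lambda>(xs, c). xs @ [c]) ` (words d i \<times> {..<d i})"
    by (force simp: words_def nth_append less_Suc_eq split: if_splits)
qed (auto simp: words_def nth_append less_Suc_eq)

lemma card_words: "card (words d i) = (\<Prod>j<i. d j)"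
proof (induction i)
  case 0
  have "words d 0 = {[]}" by (auto simp: words_def)
  then show ?case by simp
next
  case (Suc i)
  have "inj_on (\<lambda>(xs, c). xs @ [c]) (words d i \<times> {..<d i})"
    by (auto simp: inj_on_def)
  then show ?case
    by (simp add: words_Suc card_image card_cartesian_product Suc.IH)
qed

lemma finite_words: "finite (words d i)"
  by (induction i) (simp_all add: words_Suc words_def[of d 0])

lemma finite_sym_tree_V: "finite (sym_tree_V h d)"
  by (simp add: sym_tree_V_eq_UN_words finite_words)

lemma sym_tree_E_iff:
  "(xs, ys) \<in> sym_tree_E h d \<longleftrightarrow> (\<exists>c. ys = xs @ [c] \<and> xs @ [c] \<in> sym_tree_V h d)"
  by (auto simp: sym_tree_E_def)

lemma relpow_sym_tree_E_from_Nil: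
  "([], ys) \<in> sym_tree_E h d ^^ i \<longleftrightarrow> ys \<in> sym_tree_V h d \<and> length ys = i"
proof (induction i arbitrary: ys)
  case 0
  then show ?case by (auto simp: sym_tree_V_def)
next
  case (Suc i)
  show ?case
  proof
    assume "([], ys) \<in> sym_tree_E h d ^^ Suc i"
    then obtain xs where "([], xs) \<in> sym_tree_E h d ^^ i" "(xs, ys) \<in> sym_tree_E h d"
      by auto
    with Suc.IH show "ys \<in> sym_tree_V h d \<and> length ys = Suc i"
      by (auto simp: sym_tree_E_iff)
  next
    assume ys: "ys \<in> sym_tree_V h d \<and> length ys = Suc i"
    then obtain xs c where "ys = xs @ [c]"
      by (metis length_Suc_conv_rev)
    with ys Suc.IH show "([], ys) \<in> sym_tree_E h d ^^ Suc i"
      by (auto simp: sym_tree_E_iff snoc_in_sym_tree_V_iff)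
  qed
qed

lemma out_degree_sym_tree_E:
  "out_degree (sym_tree_E h d) xs =
     (if xs \<in> sym_tree_V h d \<and> length xs < h then d (length xs) else 0)"
proof -
  have "{ys. (xs, ys) \<in> sym_tree_E h d} =
      (if xs \<in> sym_tree_V h d \<and> length xs < h then (\<lambda>c. xs @ [c]) ` {..<d (length xs)} else {})"
    by (auto simp: sym_tree_E_iff snoc_in_sym_tree_V_iff)
  then show ?thesis
    by (simp add: out_degree_def card_image inj_on_def)
qed

lemma out_tree_sym_tree: "out_tree (sym_tree_V h d) (sym_tree_E h d) []"
  unfolding out_tree_def
proof (intro conjI ballI allI impI)
  fix v assume v: "v \<in> sym_tree_V h d"
  then show "([], v) \<in> (sym_tree_E h d)\<^sup>*"
    by (metis relpow_sym_tree_E_from_Nil relpow_imp_rtrancl)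
  assume "v \<noteq> []"
  then obtain xs c where "v = xs @ [c]"
    by (metis rev_exhaust)
  with v show "\<exists>!u. (u, v) \<in> sym_tree_E h d"
    by (auto simp: sym_tree_E_iff)
qed (auto simp: finite_sym_tree_V sym_tree_E_iff snoc_in_sym_tree_V_iff, simp add: sym_tree_V_def)

lemma symmetric_out_tree_sym_tree: "symmetric_out_tree (sym_tree_V h d) (sym_tree_E h d) []"
  by (auto simp: symmetric_out_tree_def out_tree_sym_tree level_def
      relpow_sym_tree_E_from_Nil out_degree_sym_tree_E)

lemma prod_lessThan_le_prod_lessThan:
  fixes d :: "nat \<Rightarrow> nat"
  assumes "\<forall>j<h. 0 < d j" and "i \<le> h"
  shows "(\<Prod>j<i. d j) \<le> (\<Prod>j<h. d j)"
proof -
  have "(\<Prod>j<h. d j) = (\<Prod>j\<in>{..<h} - {..<i}. d j) * (\<Prod>j<i. d j)"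
    using assms(2) by (intro prod.subset_diff) auto
  moreover have "1 \<le> (\<Prod>j\<in>{..<h} - {..<i}. d j)"
    using assms(1) by (intro prod_ge_1) (auto simp: Suc_le_eq)
  ultimately show ?thesis by simp
qed

lemma card_sym_tree_V_le:
  assumes "\<forall>j<h. 0 < d j"
  shows "card (sym_tree_V h d) \<le> (h + 1) * (\<Prod>j<h. d j)"
proof -
  have "card (sym_tree_V h d) \<le> (\<Sum>i\<le>h. card (words d i))"
    unfolding sym_tree_V_eq_UN_words by (rule card_UN_le) simp
  also have "\<dots> \<le> (\<Sum>i\<le>h. \<Prod>j<h. d j)"
    using prod_lessThan_le_prod_lessThan[OF assms] by (intro sum_mono) (simp add: card_words)
  finally show ?thesis by simp
qed

lemma card_out_leaves_sym_tree_le: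
  assumes "\<forall>j<h. 0 < d j"
  shows "card (out_leaves (sym_tree_V h d) (sym_tree_E h d)) \<le> (\<Prod>j<h. d j)"
proof -
  have "out_leaves (sym_tree_V h d) (sym_tree_E h d) \<subseteq> words d h"
  proof
    fix xs assume "xs \<in> out_leaves (sym_tree_V h d) (sym_tree_E h d)"
    then have "xs \<in> sym_tree_V h d" and "\<not> length xs < h"
      using assms by (auto simp: out_leaves_def out_degree_sym_tree_E split: if_splits)
    then show "xs \<in> words d h"
      by (simp add: sym_tree_V_def words_def)
  qed
  then have "card (out_leaves (sym_tree_V h d) (sym_tree_E h d)) \<le> card (words d h)"
    by (intro card_mono finite_words)
  then show ?thesis by (simp add: card_words)
qed

lemma relpow_map_prod_image_iff:
  assumes "inj \<phi>"
  shows "(\<phi> a, y) \<in> (map_prod \<phi> \<phi> ` R) ^^ n \<longleftrightarrow> (\<exists>b. y = \<phi> b \<and> (a, b) \<in> R ^^ n)"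
proof (induction n arbitrary: y)
  case (Suc n)
  have "(\<phi> a, y) \<in> (map_prod \<phi> \<phi> ` R) ^^ Suc n \<longleftrightarrow>
      (\<exists>z. (\<phi> a, z) \<in> (map_prod \<phi> \<phi> ` R) ^^ n \<and> (z, y) \<in> map_prod \<phi> \<phi> ` R)"
    by auto
  also have "\<dots> \<longleftrightarrow> (\<exists>c. (a, c) \<in> R ^^ n \<and> (\<exists>b. (c, b) \<in> R \<and> y = \<phi> b))"
    using Suc.IH assms by (auto simp: inj_eq)
  also have "\<dots> \<longleftrightarrow> (\<exists>b. y = \<phi> b \<and> (a, b) \<in> R ^^ Suc n)"
    by auto
  finally show ?case .
qed auto

lemma out_degree_map_prod_image:
  assumes "inj \<phi>"
  shows "out_degree (map_prod \<phi> \<phi> ` R) (\<phi> a) = out_degree R a"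
proof -
  have "{w. (\<phi> a, w) \<in> map_prod \<phi> \<phi> ` R} = \<phi> ` {w. (a, w) \<in> R}"
    using assms by (auto simp: inj_eq)
  then show ?thesis
    unfolding out_degree_def by (simp add: card_image inj_on_subset[OF assms])
qed

lemma level_map_prod_image:
  "inj \<phi> \<Longrightarrow> level (map_prod \<phi> \<phi> ` R) (\<phi> r) i = \<phi> ` level R r i"
  by (auto simp: level_def relpow_map_prod_image_iff)

lemma out_leaves_map_prod_image:
  "inj \<phi> \<Longrightarrow> out_leaves (\<phi> ` V) (map_prod \<phi> \<phi> ` R) = \<phi> ` out_leaves V R"
  by (auto simp: out_leaves_def out_degree_map_prod_image)

lemma prod_le_two_power_sum:
  fixes d :: "'i \<Rightarrow> nat"
  assumes "\<forall>j\<in>A. 0 < d j"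
  shows "(\<Prod>j\<in>A. d j) \<le> 2 ^ (\<Sum>j\<in>A. d j - 1)"
proof -
  have "n \<le> 2 ^ (n - 1)" if "0 < n" for n :: nat
    using less_exp[of "n - 1"] that by linarith
  then have "(\<Prod>j\<in>A. d j) \<le> (\<Prod>j\<in>A. 2 ^ (d j - 1))"
    using assms by (intro prod_mono) auto
  then show ?thesis
    by (simp add: power_sum)
qed

lemma two_power_pred_le_self_power: "(2::nat) ^ (l - 1) \<le> l ^ l"
proof (cases "l \<le> 1")
  case True
  then show ?thesis by (cases l) auto
next
  case False
  have "(2::nat) ^ (l - 1) \<le> 2 ^ l" by (intro power_increasing) auto
  also have "\<dots> \<le> l ^ l" using False by (intro power_mono) auto
  finally show ?thesis .
qed

locale rooted_out_tree =
  fixes V :: "'a set" and E :: "('a \<times> 'a) set" and r :: 'a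
  assumes out_tree: "out_tree V E r"
begin

lemma finite_V: "finite V"
  and root_in_V: "r \<in> V"
  and edge_in_V: "(u, v) \<in> E \<Longrightarrow> u \<in> V \<and> v \<in> V"
  and no_edge_to_root: "(u, r) \<notin> E"
  and ex1_parent: "v \<in> V \<Longrightarrow> v \<noteq> r \<Longrightarrow> \<exists>!u. (u, v) \<in> E"
  and reachable: "v \<in> V \<Longrightarrow> (r, v) \<in> E\<^sup>*"
  using out_tree unfolding out_tree_def by auto

lemma level_subset_V: "level E r n \<subseteq> V"
  using root_in_V by (cases n) (auto simp: level_def dest: edge_in_V)

lemma relpow_from_root_unique: "(r, v) \<in> E ^^ n \<Longrightarrow> (r, v) \<in> E ^^ m \<Longrightarrow> n = m"
proof (induction n arbitrary: v m)
  case 0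
  then show ?case
    using no_edge_to_root by (cases m) auto
next
  case (Suc n)
  then obtain u where u: "(r, u) \<in> E ^^ n" "(u, v) \<in> E" by auto
  then have "v \<noteq> r" "v \<in> V" using no_edge_to_root edge_in_V by auto
  with Suc.prems(2) obtain m' u' where "m = Suc m'" "(r, u') \<in> E ^^ m'" "(u', v) \<in> E"
    by (cases m) auto
  moreover from this u have "u' = u"
    using ex1_parent[OF \<open>v \<in> V\<close> \<open>v \<noteq> r\<close>] by blast
  ultimately show ?case
    using Suc.IH u by blast
qed

definition depth :: "'a \<Rightarrow> nat" where
  "depth v = (THE n. (r, v) \<in> E ^^ n)"

lemma depth_eq: "(r, v) \<in> E ^^ n \<Longrightarrow> depth v = n"
  unfolding depth_def by (rule the_equality) (auto intro: relpow_from_root_unique)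

lemma relpow_depth: "v \<in> V \<Longrightarrow> (r, v) \<in> E ^^ depth v"
  using reachable[of v] depth_eq[of v] by (auto simp: rtrancl_power)

lemma in_level_iff: "v \<in> level E r j \<longleftrightarrow> v \<in> V \<and> depth v = j"
  using level_subset_V relpow_depth depth_eq unfolding level_def by blast

lemma depth_eq_0_iff: "v \<in> V \<Longrightarrow> depth v = 0 \<longleftrightarrow> v = r"
  using relpow_depth[of v] depth_eq[of r 0] by auto

definition parent :: "'a \<Rightarrow> 'a" where
  "parent v = (THE u. (u, v) \<in> E)"

lemma parent_eq:
  assumes "(u, v) \<in> E"
  shows "parent v = u"
proof -
  have "v \<in> V" "v \<noteq> r"
    using assms edge_in_V no_edge_to_root by auto
  with assms show ?thesis
    unfolding parent_def using ex1_parent by blast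
qed

lemma parent_edge: "v \<in> V \<Longrightarrow> v \<noteq> r \<Longrightarrow> (parent v, v) \<in> E"
  using ex1_parent parent_eq by blast

lemma depth_edge: "(u, v) \<in> E \<Longrightarrow> depth v = Suc (depth u)"
proof -
  assume "(u, v) \<in> E"
  with relpow_depth[of u] edge_in_V have "(r, v) \<in> E ^^ Suc (depth u)"
    by auto
  then show ?thesis by (rule depth_eq)
qed

definition height :: nat where
  "height = Max (depth ` V)"

lemma depth_le_height: "v \<in> V \<Longrightarrow> depth v \<le> height"
  unfolding height_def using finite_V by auto

lemma level_nonempty: "j \<le> height \<Longrightarrow> level E r j \<noteq> {}"
proof -
  assume "j \<le> height"
  have "height \<in> depth ` V"
    unfolding height_def using finite_V root_in_V by (intro Max_in) auto
  then obtain v where "v \<in> V" "depth v = j + (height - j)"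
    using \<open>j \<le> height\<close> by auto
  then obtain u where "(r, u) \<in> E ^^ j"
    using relpow_depth by (metis relpow_add relcomp.cases)
  then show ?thesis by (auto simp: level_def)
qed

lemma height_less_card_V: "height < card V"
proof -
  have "{..height} \<subseteq> depth ` V"
    using level_nonempty by (force simp: in_level_iff)
  then have "card {..height} \<le> card (depth ` V)"
    using finite_V by (intro card_mono) auto
  also have "\<dots> \<le> card V"
    using finite_V by (rule card_image_le)
  finally show ?thesis by simp
qed

definition children :: "'a \<Rightarrow> 'a set" where
  "children u = {v. (u, v) \<in> E}"

lemma finite_children: "finite (children u)"
  using finite_V by (rule finite_subset[rotated]) (auto simp: children_def dest: edge_in_V)

lemma card_E: "card E = card V - 1"
proof -
  have "bij_betw snd E (V - {r})"
    unfolding bij_betw_def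
  proof
    show "inj_on snd E"
      by (rule inj_onI) (metis parent_eq prod.collapse)
    show "snd ` E = V - {r}"
      using edge_in_V no_edge_to_root parent_edge by force
  qed
  then show ?thesis
    using root_in_V finite_V by (simp add: bij_betw_same_card)
qed

lemma sum_out_degree: "(\<Sum>v\<in>V. out_degree E v) = card V - 1"
proof -
  have "E = Sigma V children"
    using edge_in_V by (auto simp: children_def)
  also have "card (Sigma V children) = (\<Sum>v\<in>V. card (children v))"
    using finite_V finite_children by simp
  finally have "card E = (\<Sum>v\<in>V. card (children v))" .
  then show ?thesis
    by (simp add: card_E out_degree_def children_def)
qed

lemma card_out_leaves_eq: "card (out_leaves V E) = (\<Sum>v\<in>V. out_degree E v - 1) + 1"
proof -
  let ?leaf = "\<lambda>v. if out_degree E v = 0 then 1 else 0 :: nat"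
  have "(\<Sum>v\<in>V. out_degree E v - 1) + card V = (\<Sum>v\<in>V. out_degree E v - 1 + 1)"
    by (simp add: sum_Suc)
  also have "\<dots> = (\<Sum>v\<in>V. out_degree E v + ?leaf v)"
    by (rule sum.cong) auto
  also have "\<dots> = (card V - 1) + (\<Sum>v\<in>V. ?leaf v)"
    by (simp add: sum.distrib sum_out_degree)
  also have "(\<Sum>v\<in>V. ?leaf v) = card (out_leaves V E)"
    using finite_V by (simp add: sum.If_cases out_leaves_def Int_def conj_commute)
  finally have "(\<Sum>v\<in>V. out_degree E v - 1) + card V = (card V - 1) + card (out_leaves V E)" .
  moreover have "0 < card V"
    using finite_V root_in_V by (auto simp: card_gt_0_iff)
  ultimately show ?thesis by simp
qed

definition branching :: "nat \<Rightarrow> nat" where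
  "branching j = max 1 (Max (out_degree E ` level E r j))"

lemma branching_pos: "0 < branching j"
  by (simp add: branching_def less_max_iff_disj)

lemma out_degree_le_branching:
  assumes "v \<in> V"
  shows "out_degree E v \<le> branching (depth v)"
proof -
  have "out_degree E v \<le> Max (out_degree E ` level E r (depth v))"
    using assms finite_subset[OF level_subset_V finite_V] by (intro Max_ge) (auto simp: in_level_iff)
  then show ?thesis
    by (simp add: branching_def)
qed

lemma branching_witness:
  assumes "j \<le> height"
  shows "\<exists>v\<in>V. depth v = j \<and> branching j - 1 = out_degree E v - 1"
proof -
  have "Max (out_degree E ` level E r j) \<in> out_degree E ` level E r j"
    using finite_subset[OF level_subset_V finite_V] level_nonempty[OF assms] by (intro Max_in) auto
  then show ?thesis
    by (auto simp: branching_def in_level_iff)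
qed

lemma sum_branching_le: "(\<Sum>j<height. branching j - 1) \<le> card (out_leaves V E) - 1"
proof -
  define w where "w j = (SOME v. v \<in> V \<and> depth v = j \<and> branching j - 1 = out_degree E v - 1)"
    for j
  have w: "w j \<in> V \<and> depth (w j) = j \<and> branching j - 1 = out_degree E (w j) - 1"
    if "j < height" for j
  proof -
    have "\<exists>v. v \<in> V \<and> depth v = j \<and> branching j - 1 = out_degree E v - 1"
      using branching_witness[of j] that by auto
    then show ?thesis
      unfolding w_def by (rule someI_ex)
  qed
  then have "inj_on w {..<height}"
    by (intro inj_on_inverseI[where g = depth]) simp
  have "(\<Sum>j<height. branching j - 1) = (\<Sum>j<height. out_degree E (w j) - 1)"
    using w by (intro sum.cong) simp_all
  also have "\<dots> = (\<Sum>v\<in>w ` {..<height}. out_degree E v - 1)"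
    using \<open>inj_on w {..<height}\<close> by (simp add: sum.reindex)
  also have "\<dots> \<le> (\<Sum>v\<in>V. out_degree E v - 1)"
    using w finite_V by (intro sum_mono2) auto
  finally show ?thesis
    by (simp add: card_out_leaves_eq)
qed

lemma prod_branching_le: "(\<Prod>j<height. branching j) \<le> card (out_leaves V E) ^ card (out_leaves V E)"
proof -
  have "(\<Prod>j<height. branching j) \<le> 2 ^ (\<Sum>j<height. branching j - 1)"
    by (rule prod_le_two_power_sum) (simp add: branching_pos)
  also have "\<dots> \<le> 2 ^ (card (out_leaves V E) - 1)"
    using sum_branching_le by (intro power_increasing) auto
  also have "\<dots> \<le> card (out_leaves V E) ^ card (out_leaves V E)"
    by (rule two_power_pred_le_self_power)
  finally show ?thesis .
qed

lemma card_sym_tree_V_le_card_V_mult: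
  "card (sym_tree_V height branching) \<le> card V * (\<Prod>j<height. branching j)"
proof -
  have "card (sym_tree_V height branching) \<le> (height + 1) * (\<Prod>j<height. branching j)"
    using card_sym_tree_V_le branching_pos by blast
  also have "\<dots> \<le> card V * (\<Prod>j<height. branching j)"
    using height_less_card_V by (intro mult_right_mono) auto
  finally show ?thesis .
qed

definition child_index :: "'a \<Rightarrow> 'a \<Rightarrow> nat" where
  "child_index u = (SOME f. bij_betw f (children u) {..<card (children u)})"

lemma bij_betw_child_index: "bij_betw (child_index u) (children u) {..<card (children u)}"
  unfolding child_index_def
  using someI_ex[OF ex_bij_betw_finite_nat[OF finite_children]] by (simp add: atLeast0LessThan)

primrec address :: "nat \<Rightarrow> 'a \<Rightarrow> nat list" where
  "address 0 v = []"
| "address (Suc n) v = address n (parent v) @ [child_index (parent v) v]"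

lemma length_address: "length (address n v) = n"
  by (induction n arbitrary: v) auto

lemma child_index_less_branching:
  assumes "(u, v) \<in> E"
  shows "child_index u v < branching (depth u)"
proof -
  have "child_index u v < card (children u)"
    using assms bij_betw_apply[OF bij_betw_child_index] by (force simp: children_def)
  also have "\<dots> \<le> branching (depth u)"
    using assms edge_in_V out_degree_le_branching by (simp add: out_degree_def children_def)
  finally show ?thesis .
qed

lemma address_in_words: "v \<in> V \<Longrightarrow> depth v = n \<Longrightarrow> address n v \<in> words branching n"
proof (induction n arbitrary: v)
  case 0
  then show ?case by (simp add: words_def)
next
  case (Suc n)
  then have "v \<noteq> r" using depth_eq_0_iff by force
  then have edge: "(parent v, v) \<in> E" using Suc.prems parent_edge by blast
  then have "depth (parent v) = n" using Suc.prems depth_edge by simp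
  with edge have "address n (parent v) \<in> words branching n"
    and "child_index (parent v) v < branching n"
    using Suc.IH edge_in_V child_index_less_branching by force+
  then show ?case by (auto simp: words_Suc)
qed

lemma address_eq_imp_eq:
  "u \<in> V \<Longrightarrow> v \<in> V \<Longrightarrow> depth u = n \<Longrightarrow> depth v = n \<Longrightarrow> address n u = address n v \<Longrightarrow> u = v"
proof (induction n arbitrary: u v)
  case 0
  then show ?case using depth_eq_0_iff by simp
next
  case (Suc n)
  then have "u \<noteq> r" "v \<noteq> r" using depth_eq_0_iff by force+
  then have eu: "(parent u, u) \<in> E" and ev: "(parent v, v) \<in> E"
    using Suc.prems parent_edge by blast+
  then have "parent u = parent v"
    using Suc edge_in_V depth_edge by (metis Suc_inject address.simps(2) append1_eq_conv)
  moreover have "child_index (parent u) u = child_index (parent v) v"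
    using Suc.prems(5) by simp
  ultimately show ?case
    using eu ev bij_betw_child_index[of "parent u"]
    by (auto simp: bij_betw_def inj_on_def children_def)
qed

definition code :: "'a \<Rightarrow> nat list" where
  "code v = address (depth v) v"

lemma code_in_sym_tree_V: "v \<in> V \<Longrightarrow> code v \<in> sym_tree_V height branching"
  unfolding code_def sym_tree_V_eq_UN_words using address_in_words depth_le_height by blast

lemma subgraph_emb_code: "subgraph_emb code V E (sym_tree_V height branching) (sym_tree_E height branching)"
  unfolding subgraph_emb_def
proof (intro conjI allI impI)
  show "inj_on code V"
    by (rule inj_onI) (metis code_def length_address address_eq_imp_eq)
  show "code ` V \<subseteq> sym_tree_V height branching"
    using code_in_sym_tree_V by blast
  fix u v assume edge: "(u, v) \<in> E"
  then have "code v = code u @ [child_index u v]"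
    by (simp add: code_def depth_edge parent_eq)
  moreover have "code v \<in> sym_tree_V height branching"
    using edge edge_in_V code_in_sym_tree_V by blast
  ultimately show "(code u, code v) \<in> sym_tree_E height branching"
    by (simp add: sym_tree_E_iff)
qed

lemma out_tree_map_prod_image:
  assumes inj: "inj \<phi>"
  shows "out_tree (\<phi> ` V) (map_prod \<phi> \<phi> ` E) (\<phi> r)"
  unfolding out_tree_def
proof (intro conjI ballI allI impI)
  show "finite (\<phi> ` V)" "\<phi> r \<in> \<phi> ` V" "map_prod \<phi> \<phi> ` E \<subseteq> \<phi> ` V \<times> \<phi> ` V"
    using finite_V root_in_V edge_in_V by auto
  fix u
  show "(u, \<phi> r) \<notin> map_prod \<phi> \<phi> ` E"
    using no_edge_to_root inj by (auto simp: inj_eq)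
next
  fix v assume "v \<in> \<phi> ` V"
  then obtain b where b: "v = \<phi> b" "b \<in> V" by blast
  have "(r, b) \<in> E ^^ depth b"
    using b(2) by (rule relpow_depth)
  then have "(\<phi> r, v) \<in> (map_prod \<phi> \<phi> ` E) ^^ depth b"
    unfolding b(1) relpow_map_prod_image_iff[OF inj] by blast
  then show "(\<phi> r, v) \<in> (map_prod \<phi> \<phi> ` E)\<^sup>*"
    by (rule relpow_imp_rtrancl)
  assume "v \<noteq> \<phi> r"
  with b have edge: "(parent b, b) \<in> E"
    by (blast intro: parent_edge)
  show "\<exists>!u. (u, v) \<in> map_prod \<phi> \<phi> ` E"
  proof (rule ex1I)
    show "(\<phi> (parent b), v) \<in> map_prod \<phi> \<phi> ` E"
      using edge b(1) by force
    fix u assume "(u, v) \<in> map_prod \<phi> \<phi> ` E"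
    then obtain c d where "u = \<phi> c" "\<phi> d = \<phi> b" "(c, d) \<in> E"
      using b(1) by auto
    then show "u = \<phi> (parent b)"
      using injD[OF inj] parent_eq by metis
  qed
qed

end

lemma symmetric_out_tree_map_prod_image:
  assumes inj: "inj \<phi>" and sym: "symmetric_out_tree V R r"
  shows "symmetric_out_tree (\<phi> ` V) (map_prod \<phi> \<phi> ` R) (\<phi> r)"
  unfolding symmetric_out_tree_def
proof (intro conjI allI ballI)
  show "out_tree (\<phi> ` V) (map_prod \<phi> \<phi> ` R) (\<phi> r)"
    using sym rooted_out_tree.out_tree_map_prod_image[OF rooted_out_tree.intro inj]
    unfolding symmetric_out_tree_def by blast
  fix i u v
  assume "u \<in> level (map_prod \<phi> \<phi> ` R) (\<phi> r) i" "v \<in> level (map_prod \<phi> \<phi> ` R) (\<phi> r) i"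
  then obtain a b where ab: "u = \<phi> a" "v = \<phi> b" "a \<in> level R r i" "b \<in> level R r i"
    unfolding level_map_prod_image[OF inj] by blast
  then have "out_degree R a = out_degree R b"
    using sym unfolding symmetric_out_tree_def by blast
  then show "out_degree (map_prod \<phi> \<phi> ` R) u = out_degree (map_prod \<phi> \<phi> ` R) v"
    using ab(1,2) out_degree_map_prod_image[OF inj] by simp
qed

lemma subgraph_emb_map_prod_image:
  assumes "inj \<phi>" and "subgraph_emb f V E V' E'"
  shows "subgraph_emb (\<phi> \<circ> f) V E (\<phi> ` V') (map_prod \<phi> \<phi> ` E')"
  using assms comp_inj_on[OF _ inj_on_subset[OF assms(1) subset_UNIV]]
  unfolding subgraph_emb_def by (simp add: image_comp[symmetric] image_mono) force

theorem mainTheorem18: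
  fixes V :: "'a set" and E :: "('a \<times> 'a) set" and r :: 'a and l :: nat
  assumes "out_tree V E r"
    and "l = card (out_leaves V E)"
  shows "\<exists>(V' :: nat set) E' r' f. symmetric_out_tree V' E' r' \<and> subgraph_emb f V E V' E' \<and>
           card (out_leaves V' E') \<le> l ^ l \<and> card V' \<le> l ^ l * card V"
proof -
  interpret rooted_out_tree V E r
    using assms(1) by unfold_locales
  let ?V = "sym_tree_V height branching" and ?E = "sym_tree_E height branching"
  let ?\<phi> = "to_nat :: nat list \<Rightarrow> nat"
  have prod_le: "(\<Prod>j<height. branching j) \<le> l ^ l"
    using prod_branching_le assms(2) by simp
  have "card (out_leaves (?\<phi> ` ?V) (map_prod ?\<phi> ?\<phi> ` ?E)) \<le> l ^ l"
    using card_out_leaves_sym_tree_le[of height branching] branching_pos prod_le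
    by (simp add: out_leaves_map_prod_image card_image)
  moreover have "card (?\<phi> ` ?V) \<le> l ^ l * card V"
    using order_trans[OF card_sym_tree_V_le_card_V_mult mult_left_mono[OF prod_le]]
    by (simp add: card_image mult.commute)
  moreover note symmetric_out_tree_map_prod_image[OF inj_to_nat symmetric_out_tree_sym_tree]
    and subgraph_emb_map_prod_image[OF inj_to_nat subgraph_emb_code]
  ultimately show ?thesis
    by (intro exI conjI)
qed

end
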